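(* Let $v$ be a finite place of $F$ and $\psi:N\to S^1$ a homomorphism; let $\chi:=\psi\circ\log_{\mathcal T,v}$, a character of $\mathcal T(F_v)$ trivial on $\mathcal T(\mathcal O_v):=\ker\log_{\mathcal T,v}$. Let $s\in\mathbb C^I$ with $\operatorname{Re}s_\rho>0$ for all $\rho\in\Sigma(1)$. Then $$\int_{\mathcal T(F_v)}H_v(s,x)^{-1}\overline{\chi(x)}\,d\mu_v(x)=\sum_{n\in N}q_v^{-\varphi_s(n)}\overline{\psi(n)}=R_\Sigma(\mathbf x),$$ (absolutely convergent), where $\mathbf x=(x_i)_{i\in I}$ with $x_\rho=q_v^{-\Xi_\rho(s)}\overline{\psi(b_\rho,0)}$ for $\rho\in\Sigma(1)$ and $x_{\mathcal Y}=q_v^{-\Xi_{\mathcal Y}(s)}\overline{\psi(\mathcal Y)}$ for $\mathcal Y\in\pi_0^*$.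
   Context: Let $F$ be a number field; for a finite place $v$, $\operatorname{ord}_v$ is the normalized valuation and $q_v$ the residue field cardinality. Stacky fan $(\Sigma,N,\beta)$: $N$ finitely generated abelian of rank $d$, $\Sigma$ a complete simplicial rational fan in $N_{\mathbb Q}$, $\beta:\mathbb Z^{\Sigma(1)}\to N$ with finite cokernel and image of $\beta(e_\rho)$ a nonzero vector on $\rho$. Fix $N=N^{\mathrm{rig}}\oplus G^D$, $N^{\mathrm{rig}}=\mathbb Z^d$, $G^D=\bigoplus_{i=1}^\ell\mathbb Z/n_i\mathbb Z$; $b_\rho$ is the $N^{\mathrm{rig}}$-component of $\beta(e_\rho)$. $\mathcal T(F_v)=(F_v^\times)^d\times\prod_iF_v^\times/(F_v^\times)^{n_i}$, $\log_{\mathcal T,v}((t_j),([u_i]))=((\operatorname{ord}_vt_j)_j,(\operatorname{ord}_vu_i\bmod n_i)_i)\in N$; $\mu_v$ is the Haar measure on $\mathcal T(F_v)$ with $\mu_v(\mathcal T(\mathcal O_v))=1$. For $y\in N^{\mathrm{rig}}_{\mathbb R}$ in a cone $\sigma$ write $y=\sum_{\rho\in\sigma(1)}a_\rho(y)b_\rho$, $a_\rho(y)\ge0$, $a_\rho(y)=0$ for $\rho\notin\sigma(1)$; for $n=(y,g)$, $a_\rho(n)=a_\rho(y)$, $q(n)=(\sum_\rho\{a_\rho(y)\}b_\rho,g)$; $\pi_0^*:=q(N)\setminus\{(0,0)\}$, $I:=\Sigma(1)\sqcup\pi_0^*$. $\Xi_\rho(s)=s_\rho$, $\Xi_{\mathcal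 Y}(s)=s_{\mathcal Y}+\sum_\rho a_\rho(\mathcal Y)s_\rho$. $\varphi_s(n)=s_{q(n)}+\sum_\rho a_\rho(n)s_\rho$ if $q(n)\ne(0,0)$, else $\sum_\rho a_\rho(n)s_\rho$; $H_v(s,x)=q_v^{\varphi_s(\log_{\mathcal T,v}x)}$. For $\sigma\in\Sigma$ (including $\{0\}$; empty products $=1$) $$R_\sigma:=\frac{\prod_{\rho\in\sigma(1)}X_\rho+\sum_{\mathcal Y=(y,g)\in\pi_0^*,\ y\in\sigma}X_{\mathcal Y}\prod_{\rho\in\sigma(1),\,a_\rho(\mathcal Y)=0}X_\rho}{\prod_{\rho\in\sigma(1)}(1-X_\rho)},\qquad R_\Sigma:=\sum_{\sigma\in\Sigma}R_\sigma.$$ *)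

theory Defs
  imports "HOL-Analysis.Analysis" "HOL-Computational_Algebra.Primes"
begin

text \<open>Elements of N = N^rig (+) G^D, N^rig = Z^d (d = CARD('d)),
  G^D = (+)_{i<l} Z/n_i Z with ns = [n_1,...,n_l]; a torsion element is a function
  g :: nat => int with 0 <= g i < n_i for i < l and g i = 0 for i >= l.\<close>

type_synonym 'd Nel = "(int ^ 'd) \<times> (nat \<Rightarrow> int)"

definition Nset :: "nat list \<Rightarrow> ('d::finite) Nel set" where
  "Nset ns = {(y, g). \<forall>i. (i < length ns \<longrightarrow> 0 \<le> g i \<and> g i < int (ns ! i))
                          \<and> (length ns \<le> i \<longrightarrow> g i = 0)}"

definition zeroN :: "('d::finite) Nel" where
  "zeroN = (0, (\<lambda>i. 0))"

definition addN :: "nat list \<Rightarrow> ('d::finite) Nel \<Rightarrow> 'd Nel \<Rightarrow> 'd Nel" where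
  "addN ns n m = (fst n + fst m,
     (\<lambda>i. if i < length ns then (snd n i + snd m i) mod int (ns ! i) else 0))"

definition smultN :: "nat list \<Rightarrow> int \<Rightarrow> ('d::finite) Nel \<Rightarrow> 'd Nel" where
  "smultN ns k n = ((\<chi> j. k * (fst n $ j)),
     (\<lambda>i. if i < length ns then (k * snd n i) mod int (ns ! i) else 0))"

text \<open>The image of beta : Z^Sigma(1) -> N, beta(e_rho) = (b rho, gb rho).\<close>
definition beta_image :: "nat list \<Rightarrow> ('r::finite \<Rightarrow> int ^ ('d::finite)) \<Rightarrow> ('r \<Rightarrow> nat \<Rightarrow> int)
    \<Rightarrow> 'd Nel set" where
  "beta_image ns b gb = {n. \<exists>k :: 'r \<Rightarrow> int.
      n = ((\<chi> j. \<Sum>\<rho>\<in>UNIV. k \<rho> * (b \<rho> $ j)),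
           (\<lambda>i. if i < length ns then (\<Sum>\<rho>\<in>UNIV. k \<rho> * gb \<rho> i) mod int (ns ! i) else 0))}"

definition rvec :: "int ^ ('d::finite) \<Rightarrow> real ^ 'd" where
  "rvec y = (\<chi> j. real_of_int (y $ j))"

text \<open>The cone spanned by the rays in S (rays indexed by the finite type 'r = Sigma(1),
  the ray rho being spanned by b rho).\<close>
definition cone_of :: "('r::finite \<Rightarrow> int ^ ('d::finite)) \<Rightarrow> 'r set \<Rightarrow> (real ^ 'd) set" where
  "cone_of b S = {(\<Sum>\<rho>\<in>S. c \<rho> *\<^sub>R rvec (b \<rho>)) | c. \<forall>\<rho>\<in>S. 0 \<le> c \<rho>}"

text \<open>Complete simplicial fan: cones are cone_of b S for S in Sig; the rays (1-dim cones)
  are exactly the cone_of b {rho}.\<close>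
definition complete_simplicial_fan :: "('r::finite \<Rightarrow> int ^ ('d::finite)) \<Rightarrow> 'r set set \<Rightarrow> bool" where
  "complete_simplicial_fan b Sig \<longleftrightarrow>
     (\<forall>\<rho>. b \<rho> \<noteq> 0) \<and>
     (\<forall>\<rho>. {\<rho>} \<in> Sig) \<and>
     (\<forall>S\<in>Sig. \<forall>T. T \<subseteq> S \<longrightarrow> T \<in> Sig) \<and>
     (\<forall>S\<in>Sig. \<forall>c. (\<Sum>\<rho>\<in>S. c \<rho> *\<^sub>R rvec (b \<rho>)) = 0 \<longrightarrow> (\<forall>\<rho>\<in>S. c \<rho> = 0)) \<and>
     (\<forall>S\<in>Sig. \<forall>T\<in>Sig. cone_of b S \<inter> cone_of b T = cone_of b (S \<inter> T)) \<and>
     (\<Union>S\<in>Sig. cone_of b S) = UNIV"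

definition acoef :: "('r::finite \<Rightarrow> int ^ ('d::finite)) \<Rightarrow> 'r set set \<Rightarrow> real ^ 'd \<Rightarrow> 'r \<Rightarrow> real" where
  "acoef b Sig y = (THE c. \<exists>S\<in>Sig. (\<forall>\<rho>. \<rho> \<notin> S \<longrightarrow> c \<rho> = 0) \<and> (\<forall>\<rho>\<in>S. 0 \<le> c \<rho>)
                          \<and> y = (\<Sum>\<rho>\<in>S. c \<rho> *\<^sub>R rvec (b \<rho>)))"

definition aN :: "('r::finite \<Rightarrow> int ^ ('d::finite)) \<Rightarrow> 'r set set \<Rightarrow> 'd Nel \<Rightarrow> 'r \<Rightarrow> real" where
  "aN b Sig n = acoef b Sig (rvec (fst n))"

text \<open>q(n) = (sum_rho {a_rho(y)} b_rho, g), written as y - sum_rho floor(a_rho(y)) b_rho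
  (equal, and visibly integral).\<close>
definition qN :: "('r::finite \<Rightarrow> int ^ ('d::finite)) \<Rightarrow> 'r set set \<Rightarrow> 'd Nel \<Rightarrow> 'd Nel" where
  "qN b Sig n = (fst n - (\<chi> j. \<Sum>\<rho>\<in>UNIV. \<lfloor>aN b Sig n \<rho>\<rfloor> * (b \<rho> $ j)), snd n)"

definition pi0star :: "nat list \<Rightarrow> ('r::finite \<Rightarrow> int ^ ('d::finite)) \<Rightarrow> 'r set set \<Rightarrow> 'd Nel set" where
  "pi0star ns b Sig = qN b Sig ` Nset ns - {zeroN}"

text \<open>s in C^I is given by sr (on Sigma(1)) and sY (on pi_0^*; values elsewhere irrelevant).\<close>
definition phiN :: "('r::finite \<Rightarrow> int ^ ('d::finite)) \<Rightarrow> 'r set set \<Rightarrow> ('r \<Rightarrow> complex)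
    \<Rightarrow> ('d Nel \<Rightarrow> complex) \<Rightarrow> 'd Nel \<Rightarrow> complex" where
  "phiN b Sig sr sY n =
     (if qN b Sig n \<noteq> zeroN then sY (qN b Sig n) + (\<Sum>\<rho>\<in>UNIV. of_real (aN b Sig n \<rho>) * sr \<rho>)
      else (\<Sum>\<rho>\<in>UNIV. of_real (aN b Sig n \<rho>) * sr \<rho>))"

definition XiY :: "('r::finite \<Rightarrow> int ^ ('d::finite)) \<Rightarrow> 'r set set \<Rightarrow> ('r \<Rightarrow> complex)
    \<Rightarrow> ('d Nel \<Rightarrow> complex) \<Rightarrow> 'd Nel \<Rightarrow> complex" where
  "XiY b Sig sr sY Y = sY Y + (\<Sum>\<rho>\<in>UNIV. of_real (aN b Sig Y \<rho>) * sr \<rho>)"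

text \<open>R_sigma and R_Sigma evaluated at X = (Xr on Sigma(1), XY on pi_0^*).\<close>
definition R_sigma :: "nat list \<Rightarrow> ('r::finite \<Rightarrow> int ^ ('d::finite)) \<Rightarrow> 'r set set \<Rightarrow> 'r set
    \<Rightarrow> ('r \<Rightarrow> complex) \<Rightarrow> ('d Nel \<Rightarrow> complex) \<Rightarrow> complex" where
  "R_sigma ns b Sig S Xr XY =
     ((\<Prod>\<rho>\<in>S. Xr \<rho>) +
      (\<Sum>Y\<in>{Y \<in> pi0star ns b Sig. rvec (fst Y) \<in> cone_of b S}.
          XY Y * (\<Prod>\<rho>\<in>{\<rho>\<in>S. aN b Sig Y \<rho> = 0}. Xr \<rho>)))
     / (\<Prod>\<rho>\<in>S. (1 - Xr \<rho>))"

definition R_Sigma :: "nat list \<Rightarrow> ('r::finite \<Rightarrow> int ^ ('d::finite)) \<Rightarrow> 'r set set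
    \<Rightarrow> ('r \<Rightarrow> complex) \<Rightarrow> ('d Nel \<Rightarrow> complex) \<Rightarrow> complex" where
  "R_Sigma ns b Sig Xr XY = (\<Sum>S\<in>Sig. R_sigma ns b Sig S Xr XY)"

definition Hv :: "nat \<Rightarrow> ('r::finite \<Rightarrow> int ^ ('d::finite)) \<Rightarrow> 'r set set \<Rightarrow> ('r \<Rightarrow> complex)
    \<Rightarrow> ('d Nel \<Rightarrow> complex) \<Rightarrow> ('a \<Rightarrow> 'd Nel) \<Rightarrow> 'a \<Rightarrow> complex" where
  "Hv q b Sig sr sY lg x = (of_nat q :: complex) powr (phiN b Sig sr sY (lg x))"

end

theory Submission
  imports Defs
begin

text \<open>Every \<open>n = (y, g) \<in> N\<close> lies in the cone \<open>\<sigma>\<close> spanned by the rays \<open>\<rho>\<close> with \<open>a\<^sub>\<rho>(n) > 0\<close>,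
  and splitting \<open>a\<^sub>\<rho>(n)\<close> into integer and fractional part writes it uniquely as
  \<open>n = q(n) + \<Sum>\<^sub>\<rho> k\<^sub>\<rho> b\<^sub>\<rho>\<close> with \<open>k\<^sub>\<rho> \<ge> 0\<close>, where \<open>k\<^sub>\<rho> \<ge> 1\<close> exactly for the rays of \<open>\<sigma>\<close>
  on which \<open>q(n)\<close> has coefficient 0. Conversely every such expression with \<open>q(n)\<close> in the
  finite set \<open>{0} \<union> \<pi>\<^sub>0\<^sup>*\<close> occurs. Since \<open>\<varphi>\<^sub>s\<close> is additive along this decomposition and \<open>\<psi>\<close> is a
  character, the sum over \<open>N\<close> splits into finitely many blocks indexed by \<open>(\<sigma>, q(n))\<close>, each a
  product of geometric series in the \<open>x\<^sub>\<rho>\<close>; the block sums add up to \<open>R\<^sub>\<Sigma>(\<^bold>x)\<close>. Finally \<open>log\<^sub>v\<close>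
  pushes the Haar measure forward to counting measure on \<open>N\<close>, as its fibres are translates
  of its kernel \<open>\<T>(\<O>\<^sub>v)\<close>, which has measure 1; so the integral equals the sum.\<close>

section \<open>Geometric series and products\<close>

lemma has_sum_geometric:
  fixes z :: "'a :: {real_normed_field, banach}"
  assumes "norm z < 1"
  shows "((\<lambda>n. z ^ n) has_sum (1 / (1 - z))) UNIV"
proof -
  have "(\<lambda>n. z ^ n) sums (1 / (1 - z))"
    using geometric_sums[of z] assms by simp
  moreover have "summable (\<lambda>n. norm (z ^ n))"
    using assms by (auto simp: norm_power intro!: summable_geometric)
  ultimately show ?thesis
    by (intro norm_summable_imp_has_sum)
qed

lemma has_sum_prod_geometric:
  fixes X :: "'i \<Rightarrow> 'a :: {real_normed_field, banach, second_countable_topology}"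
  assumes fin: "finite S" and lt: "\<forall>\<rho>\<in>S. norm (X \<rho>) < 1"
  shows "((\<lambda>k. \<Prod>\<rho>\<in>S. X \<rho> ^ k \<rho>) has_sum
          (\<Prod>\<rho>\<in>S. if P \<rho> then X \<rho> / (1 - X \<rho>) else 1 / (1 - X \<rho>)))
          {k::'i \<Rightarrow> nat. (\<forall>\<rho>. \<rho> \<notin> S \<longrightarrow> k \<rho> = 0) \<and> (\<forall>\<rho>\<in>S. P \<rho> \<longrightarrow> 1 \<le> k \<rho>)}"
proof -
  define D where "D \<rho> = (if P \<rho> then {1..} else (UNIV::nat set))" for \<rho>
  define G where "G \<rho> = (if P \<rho> then X \<rho> / (1 - X \<rho>) else 1 / (1 - X \<rho>))" for \<rho>
  have geom: "((\<lambda>n. z ^ n) has_sum (if P \<rho> then z / (1 - z) else 1 / (1 - z))) (D \<rho>)"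
    if "norm z < 1" for z :: 'a and \<rho>
    unfolding D_def using has_sum_geometric[OF that] has_sum_geometric_from_1[OF that] by auto
  have abs_factor: "Infinite_Sum.abs_summable_on (\<lambda>n. X \<rho> ^ n) (D \<rho>)" if "\<rho> \<in> S" for \<rho>
    using has_sum_geometric[of "norm (X \<rho>)"] has_sum_geometric_from_1[of "norm (X \<rho>)"] lt that
    by (auto simp: D_def norm_power summable_on_def)
  have "Infinite_Set_Sum.abs_summable_on (\<lambda>g. \<Prod>\<rho>\<in>S. X \<rho> ^ g \<rho>) (PiE S D)"
    using abs_factor abs_summable_equivalent
    by (intro abs_summable_on_prod_PiE[OF fin] countableI_type) blast
  then have summable: "(\<lambda>g. \<Prod>\<rho>\<in>S. X \<rho> ^ g \<rho>) summable_on PiE S D"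
    using abs_summable_equivalent abs_summable_summable by blast
  have "infsum (\<lambda>g. \<Prod>\<rho>\<in>S. X \<rho> ^ g \<rho>) (PiE S D) = (\<Prod>\<rho>\<in>S. infsum (\<lambda>n. X \<rho> ^ n) (D \<rho>))"
    by (rule infsum_prod_PiE_abs[OF fin abs_factor])
  also have "\<dots> = (\<Prod>\<rho>\<in>S. G \<rho>)"
    unfolding G_def using geom lt by (intro prod.cong refl infsumI) auto
  finally have "((\<lambda>g. \<Prod>\<rho>\<in>S. X \<rho> ^ g \<rho>) has_sum (\<Prod>\<rho>\<in>S. G \<rho>)) (PiE S D)"
    using summable by (metis has_sum_infsum)
  then show ?thesis
    unfolding G_def[symmetric]
    \<comment> \<open>exponent vectors vanishing off \<open>S\<close> are the restrictions to \<open>S\<close>\<close>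
    by (subst has_sum_reindex_bij_witness[where j = "\<lambda>k. restrict k S"
          and i = "\<lambda>g \<rho>. if \<rho> \<in> S then g \<rho> else 0" and T = "PiE S D"
          and h = "\<lambda>g. \<Prod>\<rho>\<in>S. X \<rho> ^ g \<rho>" and s' = "\<Prod>\<rho>\<in>S. G \<rho>"])
       (use \<open>(_ has_sum _) (PiE S D)\<close> in \<open>auto simp: fun_eq_iff D_def PiE_def extensional_def
          split: if_splits intro!: prod.cong\<close>)
qed

lemma powr_sum_of_nat_mult:
  fixes z :: "'a::{real_normed_field,ln}"
  assumes "z \<noteq> 0"
  shows "z powr (\<Sum>i\<in>S. of_nat (k i) * s i) = (\<Prod>i\<in>S. (z powr s i) ^ k i)"
  by (induction S rule: infinite_finite_induct) (simp_all add: assms powr_add powr_power)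

lemma prod_if_divide:
  fixes X :: "'i \<Rightarrow> 'a::field"
  assumes "finite S"
  shows "(\<Prod>\<rho>\<in>S. if P \<rho> then X \<rho> / (1 - X \<rho>) else 1 / (1 - X \<rho>))
           = (\<Prod>\<rho>\<in>{\<rho>\<in>S. P \<rho>}. X \<rho>) / (\<Prod>\<rho>\<in>S. (1 - X \<rho>))"
proof -
  have "(\<Prod>\<rho>\<in>S. if P \<rho> then X \<rho> / (1 - X \<rho>) else 1 / (1 - X \<rho>))
          = (\<Prod>\<rho>\<in>S. (if P \<rho> then X \<rho> else 1) / (1 - X \<rho>))"
    by (rule prod.cong) auto
  also have "\<dots> = (\<Prod>\<rho>\<in>S. if P \<rho> then X \<rho> else 1) / (\<Prod>\<rho>\<in>S. (1 - X \<rho>))"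
    by (rule prod_dividef)
  also have "(\<Prod>\<rho>\<in>S. if P \<rho> then X \<rho> else 1) = (\<Prod>\<rho>\<in>{\<rho>\<in>S. P \<rho>}. X \<rho>)"
    using assms by (simp add: prod.inter_filter)
  finally show ?thesis .
qed

definition torsion_set :: "nat list \<Rightarrow> (nat \<Rightarrow> int) set" where
  "torsion_set ns = {g. \<forall>i. (i < length ns \<longrightarrow> 0 \<le> g i \<and> g i < int (ns ! i))
                          \<and> (length ns \<le> i \<longrightarrow> g i = 0)}"

lemma Nset_eq_Times: "Nset ns = UNIV \<times> torsion_set ns"
  unfolding Nset_def torsion_set_def by auto

lemma finite_torsion_set: "finite (torsion_set ns)"
proof -
  let ?ext = "\<lambda>f i. if i < length ns then f i else 0"
  have "torsion_set ns \<subseteq> ?ext ` PiE {..<length ns} (\<lambda>i. {0..<int (ns ! i)})"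
  proof
    fix g assume g: "g \<in> torsion_set ns"
    then have "g = ?ext (restrict g {..<length ns})"
      by (auto simp: torsion_set_def fun_eq_iff)
    moreover have "restrict g {..<length ns} \<in> PiE {..<length ns} (\<lambda>i. {0..<int (ns ! i)})"
      using g by (auto simp: torsion_set_def)
    ultimately show "g \<in> ?ext ` PiE {..<length ns} (\<lambda>i. {0..<int (ns ! i)})"
      by blast
  qed
  then show ?thesis
    by (rule finite_subset) (intro finite_imageI finite_PiE; simp)
qed

lemma finite_bounded_int_vectors: "finite {v :: int ^ ('d'::finite). \<forall>j. \<bar>v $ j\<bar> \<le> C}"
proof -
  have "{v :: int ^ 'd'. \<forall>j. \<bar>v $ j\<bar> \<le> C} \<subseteq> vec_lambda ` PiE UNIV (\<lambda>_. {-C..C})"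
  proof
    fix v :: "int ^ 'd'" assume "v \<in> {v. \<forall>j. \<bar>v $ j\<bar> \<le> C}"
    then have "vec_nth v \<in> PiE UNIV (\<lambda>_. {-C..C})"
      by (auto simp: PiE_iff abs_le_iff minus_le_iff)
    then show "v \<in> vec_lambda ` PiE UNIV (\<lambda>_. {-C..C})"
      by (metis image_eqI vec_nth_inverse)
  qed
  then show ?thesis
    by (rule finite_subset) (intro finite_imageI finite_PiE; simp)
qed

lemma countable_Nset: "countable (Nset ns)"
  unfolding Nset_eq_Times by (rule countable_SIGMA) (auto intro: countable_finite finite_torsion_set)

lemma addN_zeroN_right: "n \<in> Nset ns \<Longrightarrow> addN ns n zeroN = n"
  by (auto simp: addN_def zeroN_def Nset_def fun_eq_iff prod_eq_iff)

lemma mod_add_eq_self_imp_zero: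
  fixes a c m :: int
  assumes "0 \<le> a" "a < m" "0 \<le> c" "c < m" and eq: "(a + c) mod m = a"
  shows "c = 0"
proof -
  have "(a + c) mod m = a mod m"
    using assms by simp
  then have "m dvd c"
    by (simp add: mod_eq_dvd_iff)
  then show ?thesis
    using assms zdvd_imp_le[of m c] by force
qed

lemma addN_eq_self_imp_zeroN:
  assumes n: "n \<in> Nset ns" and u: "u \<in> Nset ns" and eq: "addN ns n u = n"
  shows "u = zeroN"
proof -
  have "fst u = 0"
    using eq by (auto simp: addN_def prod_eq_iff)
  moreover have "snd u i = 0" for i
  proof (cases "i < length ns")
    case True
    have "(snd n i + snd u i) mod int (ns ! i) = snd n i"
      using eq True by (auto simp: addN_def prod_eq_iff dest: fun_cong[of _ _ i])
    then show ?thesis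
      using n u True by (intro mod_add_eq_self_imp_zero[of "snd n i"]) (auto simp: Nset_def)
  next
    case False
    then show ?thesis
      using u by (auto simp: Nset_def)
  qed
  ultimately show ?thesis
    by (auto simp: zeroN_def prod_eq_iff)
qed

section \<open>Coordinates with respect to a complete simplicial fan\<close>

definition lincomb :: "('r::finite \<Rightarrow> int ^ ('d::finite)) \<Rightarrow> ('r \<Rightarrow> int) \<Rightarrow> int ^ 'd" where
  "lincomb b k = (\<chi> j. \<Sum>\<rho>\<in>UNIV. k \<rho> * (b \<rho> $ j))"

lemma rvec_add: "rvec (x + y) = rvec x + rvec y"
  by (simp add: rvec_def vec_eq_iff)

lemma rvec_diff: "rvec (x - y) = rvec x - rvec y"
  by (simp add: rvec_def vec_eq_iff)

lemma rvec_lincomb: "rvec (lincomb b k) = (\<Sum>\<rho>\<in>UNIV. real_of_int (k \<rho>) *\<^sub>R rvec (b \<rho>))"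
  by (simp add: rvec_def lincomb_def vec_eq_iff sum_component)

lemma sum_UNIV_eq_sum_on:
  fixes c :: "'r::finite \<Rightarrow> 'b::comm_monoid_add"
  assumes "\<forall>\<rho>. \<rho> \<notin> S \<longrightarrow> c \<rho> = 0"
  shows "(\<Sum>\<rho>\<in>UNIV. c \<rho>) = (\<Sum>\<rho>\<in>S. c \<rho>)"
  using assms by (intro sum.mono_neutral_right) auto

lemma in_cone_ofE:
  assumes "y \<in> cone_of b S"
  obtains c where "\<forall>\<rho>. \<rho> \<notin> S \<longrightarrow> c \<rho> = 0" "\<forall>\<rho>. 0 \<le> c \<rho>"
    "y = (\<Sum>\<rho>\<in>UNIV. c \<rho> *\<^sub>R rvec (b \<rho>))"
proof -
  obtain c where c: "\<forall>\<rho>\<in>S. 0 \<le> c \<rho>" "y = (\<Sum>\<rho>\<in>S. c \<rho> *\<^sub>R rvec (b \<rho>))"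
    using assms unfolding cone_of_def by blast
  define c' where "c' \<rho> = (if \<rho> \<in> S then c \<rho> else 0)" for \<rho>
  have "y = (\<Sum>\<rho>\<in>UNIV. c' \<rho> *\<^sub>R rvec (b \<rho>))"
    unfolding c(2) by (subst sum_UNIV_eq_sum_on[where S = S]) (auto simp: c'_def)
  then show ?thesis
    using c(1) by (intro that[of c']) (auto simp: c'_def)
qed

lemma in_cone_ofI:
  assumes "\<forall>\<rho>. \<rho> \<notin> S \<longrightarrow> c \<rho> = 0" "\<forall>\<rho>. 0 \<le> c \<rho>"
    "y = (\<Sum>\<rho>\<in>UNIV. c \<rho> *\<^sub>R rvec (b \<rho>))"
  shows "y \<in> cone_of b S"
proof -
  have "y = (\<Sum>\<rho>\<in>S. c \<rho> *\<^sub>R rvec (b \<rho>))"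
    unfolding assms(3) by (rule sum_UNIV_eq_sum_on) (simp add: assms(1))
  then show ?thesis
    unfolding cone_of_def mem_Collect_eq using assms(2) by (intro exI[of _ c] conjI) auto
qed

locale complete_fan =
  fixes b :: "'r::finite \<Rightarrow> int ^ ('d::finite)" and Sig :: "'r set set"
  assumes fan: "complete_simplicial_fan b Sig"
begin

lemma fan_cone_inter:
  assumes "S \<in> Sig" "T \<in> Sig"
  shows "cone_of b S \<inter> cone_of b T = cone_of b (S \<inter> T)"
proof -
  have "\<forall>S\<in>Sig. \<forall>T\<in>Sig. cone_of b S \<inter> cone_of b T = cone_of b (S \<inter> T)"
    using fan unfolding complete_simplicial_fan_def by (elim conjE) assumption
  then show ?thesis
    using assms by simp
qed

lemma fan_independent:
  "S \<in> Sig \<Longrightarrow> (\<Sum>\<rho>\<in>S. c \<rho> *\<^sub>R rvec (b \<rho>)) = 0 \<Longrightarrow> \<rho> \<in> S \<Longrightarrow> c \<rho> = 0"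
  using fan unfolding complete_simplicial_fan_def by (elim conjE) (drule bspec, assumption, blast)

lemma fan_covers: "\<exists>S\<in>Sig. y \<in> cone_of b S"
proof -
  have "(\<Union>S\<in>Sig. cone_of b S) = UNIV"
    using fan unfolding complete_simplicial_fan_def by (elim conjE) assumption
  then show ?thesis
    by (metis UNIV_I UN_E)
qed

lemma fan_face:
  assumes "S \<in> Sig" "T \<subseteq> S"
  shows "T \<in> Sig"
proof -
  have "\<forall>S\<in>Sig. \<forall>T. T \<subseteq> S \<longrightarrow> T \<in> Sig"
    using fan unfolding complete_simplicial_fan_def by (elim conjE) assumption
  then show ?thesis
    using assms by blast
qed

lemma fan_empty: "{} \<in> Sig"
proof -
  have "{undefined} \<in> Sig"
    using fan unfolding complete_simplicial_fan_def by (elim conjE) (erule allE)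
  then show ?thesis
    by (rule fan_face) simp
qed

lemma fan_coefficients_unique:
  assumes S: "S \<in> Sig" and c0: "\<forall>\<rho>. \<rho> \<notin> S \<longrightarrow> c \<rho> = 0" and c_nonneg: "\<forall>\<rho>. 0 \<le> c \<rho>"
    and T: "T \<in> Sig" and d0: "\<forall>\<rho>. \<rho> \<notin> T \<longrightarrow> d \<rho> = 0" and d_nonneg: "\<forall>\<rho>. 0 \<le> d \<rho>"
    and eq: "(\<Sum>\<rho>\<in>UNIV. c \<rho> *\<^sub>R rvec (b \<rho>)) = (\<Sum>\<rho>\<in>UNIV. d \<rho> *\<^sub>R rvec (b \<rho>))"
  shows "c = d"
proof -
  define y where "y = (\<Sum>\<rho>\<in>UNIV. c \<rho> *\<^sub>R rvec (b \<rho>))"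
  have "y \<in> cone_of b S \<inter> cone_of b T"
    using c0 c_nonneg d0 d_nonneg eq unfolding y_def by (auto intro: in_cone_ofI)
  then obtain e where e0: "\<forall>\<rho>. \<rho> \<notin> S \<inter> T \<longrightarrow> e \<rho> = 0"
    and y: "y = (\<Sum>\<rho>\<in>UNIV. e \<rho> *\<^sub>R rvec (b \<rho>))"
    unfolding fan_cone_inter[OF S T] by (elim in_cone_ofE)
  \<comment> \<open>Both representations agree with the one on the common face \<open>S \<inter> T\<close>.\<close>
  have "c' = e" if S': "S' \<in> Sig" "S \<inter> T \<subseteq> S'" and c'0: "\<forall>\<rho>. \<rho> \<notin> S' \<longrightarrow> c' \<rho> = 0"
    and y': "y = (\<Sum>\<rho>\<in>UNIV. c' \<rho> *\<^sub>R rvec (b \<rho>))" for S' c'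
  proof
    fix \<rho>
    have "(\<Sum>\<rho>\<in>S'. (c' \<rho> - e \<rho>) *\<^sub>R rvec (b \<rho>)) = (\<Sum>\<rho>\<in>UNIV. (c' \<rho> - e \<rho>) *\<^sub>R rvec (b \<rho>))"
      using S'(2) c'0 e0 by (intro sum_UNIV_eq_sum_on[symmetric]) auto
    also have "\<dots> = 0"
      using y y' by (simp add: scaleR_diff_left sum_subtractf)
    finally have "\<rho> \<in> S' \<Longrightarrow> c' \<rho> - e \<rho> = 0"
      by (rule fan_independent[OF S'(1)])
    then show "c' \<rho> = e \<rho>"
      using S'(2) c'0 e0 by (cases "\<rho> \<in> S'") auto
  qed
  from this[OF S _ c0] this[OF T _ d0] show "c = d"
    using eq by (simp add: y_def)
qed

lemma acoef_eqI:
  assumes S: "S \<in> Sig" and c0: "\<forall>\<rho>. \<rho> \<notin> S \<longrightarrow> c \<rho> = 0" and c_nonneg: "\<forall>\<rho>. 0 \<le> c \<rho>"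
    and y: "y = (\<Sum>\<rho>\<in>UNIV. c \<rho> *\<^sub>R rvec (b \<rho>))"
  shows "acoef b Sig y = c"
  unfolding acoef_def
proof (rule the_equality)
  show "\<exists>S\<in>Sig. (\<forall>\<rho>. \<rho> \<notin> S \<longrightarrow> c \<rho> = 0) \<and> (\<forall>\<rho>\<in>S. 0 \<le> c \<rho>)
          \<and> y = (\<Sum>\<rho>\<in>S. c \<rho> *\<^sub>R rvec (b \<rho>))"
    using S c0 c_nonneg y by (auto simp: sum_UNIV_eq_sum_on)
next
  fix c' assume "\<exists>T\<in>Sig. (\<forall>\<rho>. \<rho> \<notin> T \<longrightarrow> c' \<rho> = 0) \<and> (\<forall>\<rho>\<in>T. 0 \<le> c' \<rho>)
                   \<and> y = (\<Sum>\<rho>\<in>T. c' \<rho> *\<^sub>R rvec (b \<rho>))"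
  then obtain T where T: "T \<in> Sig" "\<forall>\<rho>. \<rho> \<notin> T \<longrightarrow> c' \<rho> = 0" "\<forall>\<rho>\<in>T. 0 \<le> c' \<rho>"
    "y = (\<Sum>\<rho>\<in>T. c' \<rho> *\<^sub>R rvec (b \<rho>))" by blast
  have "\<forall>\<rho>. 0 \<le> c' \<rho>"
    using T(2,3) by (metis order_refl)
  moreover have "(\<Sum>\<rho>\<in>UNIV. c' \<rho> *\<^sub>R rvec (b \<rho>)) = (\<Sum>\<rho>\<in>UNIV. c \<rho> *\<^sub>R rvec (b \<rho>))"
    using T(2,4) y by (simp add: sum_UNIV_eq_sum_on)
  ultimately show "c' = c"
    using fan_coefficients_unique[OF T(1,2) _ S c0 c_nonneg] by blast
qed

lemma acoef_in_cone:
  assumes S: "S \<in> Sig" and y: "y \<in> cone_of b S"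
  shows "(\<forall>\<rho>. \<rho> \<notin> S \<longrightarrow> acoef b Sig y \<rho> = 0) \<and> (\<forall>\<rho>. 0 \<le> acoef b Sig y \<rho>)
           \<and> y = (\<Sum>\<rho>\<in>UNIV. acoef b Sig y \<rho> *\<^sub>R rvec (b \<rho>))"
proof -
  obtain c where "\<forall>\<rho>. \<rho> \<notin> S \<longrightarrow> c \<rho> = 0" "\<forall>\<rho>. 0 \<le> c \<rho>" "y = (\<Sum>\<rho>\<in>UNIV. c \<rho> *\<^sub>R rvec (b \<rho>))"
    using y by (rule in_cone_ofE)
  with acoef_eqI[OF S this] show ?thesis by simp
qed

lemma aN_nonneg: "0 \<le> aN b Sig n \<rho>"
  using fan_covers acoef_in_cone unfolding aN_def by blast

lemma rvec_fst_eq_aN: "rvec (fst n) = (\<Sum>\<rho>\<in>UNIV. aN b Sig n \<rho> *\<^sub>R rvec (b \<rho>))"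
  using fan_covers acoef_in_cone unfolding aN_def by blast

lemma aN_support_in_fan: "{\<rho>. 0 < aN b Sig n \<rho>} \<in> Sig"
proof -
  obtain S where "S \<in> Sig" "rvec (fst n) \<in> cone_of b S"
    using fan_covers by blast
  then have "{\<rho>. 0 < aN b Sig n \<rho>} \<subseteq> S"
    using acoef_in_cone unfolding aN_def by force
  then show ?thesis
    by (rule fan_face[OF \<open>S \<in> Sig\<close>])
qed

lemma aN_pos_iff: "0 < aN b Sig n \<rho> \<longleftrightarrow> aN b Sig n \<rho> \<noteq> 0"
  using aN_nonneg[of n \<rho>] by auto

lemma aN_in_cone: "S \<in> Sig \<Longrightarrow> rvec (fst Y) \<in> cone_of b S \<Longrightarrow> \<rho> \<notin> S \<Longrightarrow> aN b Sig Y \<rho> = 0"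
  using acoef_in_cone unfolding aN_def by blast

lemma aN_zeroN: "aN b Sig zeroN = (\<lambda>\<rho>. 0)"
  unfolding aN_def zeroN_def by (rule acoef_eqI[OF fan_empty]) (simp_all add: rvec_def vec_eq_iff)

lemma qN_eq_lincomb: "qN b Sig n = (fst n - lincomb b (\<lambda>\<rho>. \<lfloor>aN b Sig n \<rho>\<rfloor>), snd n)"
  unfolding qN_def lincomb_def ..

lemma rvec_fst_qN: "rvec (fst (qN b Sig n)) = (\<Sum>\<rho>\<in>UNIV. frac (aN b Sig n \<rho>) *\<^sub>R rvec (b \<rho>))"
  unfolding qN_eq_lincomb
  by (simp add: rvec_diff rvec_lincomb rvec_fst_eq_aN[of n] frac_def scaleR_diff_left sum_subtractf)

lemma qN_in_support_cone: "rvec (fst (qN b Sig n)) \<in> cone_of b {\<rho>. 0 < aN b Sig n \<rho>}"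
  by (intro in_cone_ofI[OF _ _ rvec_fst_qN[of n]]) (auto simp: frac_ge_0 aN_pos_iff)

lemma aN_qN: "aN b Sig (qN b Sig n) = (\<lambda>\<rho>. frac (aN b Sig n \<rho>))"
  unfolding aN_def[of b Sig "qN b Sig n"]
  by (intro acoef_eqI[OF aN_support_in_fan[of n] _ _ rvec_fst_qN[of n]]) (auto simp: frac_ge_0 aN_pos_iff)

lemma abs_fst_qN_le: "\<bar>fst (qN b Sig n) $ j\<bar> \<le> (\<Sum>\<rho>\<in>UNIV. \<bar>b \<rho> $ j\<bar>)"
proof -
  have "real_of_int (fst (qN b Sig n) $ j) = (\<Sum>\<rho>\<in>UNIV. frac (aN b Sig n \<rho>) * real_of_int (b \<rho> $ j))"
    using arg_cong[OF rvec_fst_qN[of n], of "\<lambda>v. v $ j"] by (simp add: rvec_def sum_component)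
  also have "\<bar>\<dots>\<bar> \<le> (\<Sum>\<rho>\<in>UNIV. \<bar>frac (aN b Sig n \<rho>) * real_of_int (b \<rho> $ j)\<bar>)"
    by (rule sum_abs)
  also have "\<dots> \<le> (\<Sum>\<rho>\<in>UNIV. real_of_int \<bar>b \<rho> $ j\<bar>)"
  proof (intro sum_mono)
    fix \<rho>
    have "0 \<le> frac (aN b Sig n \<rho>)" "frac (aN b Sig n \<rho>) \<le> 1"
      using frac_ge_0 frac_lt_1 less_imp_le by blast+
    then show "\<bar>frac (aN b Sig n \<rho>) * real_of_int (b \<rho> $ j)\<bar> \<le> real_of_int \<bar>b \<rho> $ j\<bar>"
      by (simp add: abs_mult mult_left_le_one_le)
  qed
  finally show ?thesis
    by (metis of_int_abs of_int_le_iff of_int_sum)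
qed

lemma finite_qN_image: "finite (qN b Sig ` Nset ns)"
proof -
  define C where "C = Max (range (\<lambda>j. \<Sum>\<rho>\<in>UNIV. \<bar>b \<rho> $ j\<bar>))"
  have "qN b Sig ` Nset ns \<subseteq> {v. \<forall>j. \<bar>v $ j\<bar> \<le> C} \<times> torsion_set ns"
  proof
    fix x assume "x \<in> qN b Sig ` Nset ns"
    then obtain n where n: "n \<in> Nset ns" "x = qN b Sig n"
      by blast
    have "\<bar>fst x $ j\<bar> \<le> C" for j
      unfolding n(2) C_def by (rule order_trans[OF abs_fst_qN_le Max_ge]) auto
    then show "x \<in> {v. \<forall>j. \<bar>v $ j\<bar> \<le> C} \<times> torsion_set ns"
      using n by (auto simp: Nset_eq_Times qN_def)
  qed
  then show ?thesis
    by (rule finite_subset) (intro finite_cartesian_product finite_bounded_int_vectors finite_torsion_set)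
qed

end

section \<open>Decomposition of \<open>N\<close> into blocks\<close>

locale character_sum = complete_fan b Sig
  for b :: "'r::finite \<Rightarrow> int ^ ('d::finite)" and Sig :: "'r set set" +
  fixes ns :: "nat list" and q :: nat and psi :: "'d Nel \<Rightarrow> complex"
    and sr :: "'r \<Rightarrow> complex" and sY :: "'d Nel \<Rightarrow> complex"
  assumes ns_pos: "\<forall>i < length ns. 0 < ns ! i"
    and q_gt_1: "1 < q"
    and psi_unit: "\<forall>n\<in>Nset ns. norm (psi n) = 1"
    and psi_hom: "\<forall>n\<in>Nset ns. \<forall>m\<in>Nset ns. psi (addN ns n m) = psi n * psi m"
    and Re_sr_pos: "\<forall>\<rho>. 0 < Re (sr \<rho>)"
begin

definition psi_rig :: "int ^ 'd \<Rightarrow> complex" where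
  "psi_rig v = psi (v, \<lambda>i. 0)"

definition xr :: "'r \<Rightarrow> complex" where
  "xr \<rho> = (of_nat q :: complex) powr (- sr \<rho>) * cnj (psi_rig (b \<rho>))"

definition xY :: "'d Nel \<Rightarrow> complex" where
  "xY Y = (of_nat q :: complex) powr (- XiY b Sig sr sY Y) * cnj (psi Y)"

definition summand :: "'d Nel \<Rightarrow> complex" where
  "summand n = (of_nat q :: complex) powr (- phiN b Sig sr sY n) * cnj (psi n)"

lemma rig_in_Nset: "(v, \<lambda>i. 0) \<in> Nset ns"
  using ns_pos by (auto simp: Nset_def)

lemma psi_rig_add: "psi_rig (u + v) = psi_rig u * psi_rig v"
proof -
  have "addN ns (u, \<lambda>i. 0) (v, \<lambda>i. 0) = (u + v, \<lambda>i. 0)"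
    by (auto simp: addN_def fun_eq_iff)
  then show ?thesis
    using psi_hom rig_in_Nset unfolding psi_rig_def by metis
qed

lemma norm_psi_rig: "norm (psi_rig v) = 1"
  using psi_unit rig_in_Nset unfolding psi_rig_def by blast

lemma psi_rig_zero: "psi_rig 0 = 1"
proof -
  have "psi_rig 0 * psi_rig 0 = psi_rig 0 * 1"
    using psi_rig_add[of 0 0] by simp
  moreover have "psi_rig 0 \<noteq> 0"
    using norm_psi_rig[of 0] by auto
  ultimately show ?thesis
    by (metis mult_cancel_left)
qed

lemma psi_zeroN: "psi zeroN = 1"
  using psi_rig_zero unfolding psi_rig_def zeroN_def by simp

lemma psi_rig_lincomb: "psi_rig (lincomb b (\<lambda>\<rho>. int (k \<rho>))) = (\<Prod>\<rho>\<in>UNIV. psi_rig (b \<rho>) ^ k \<rho>)"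
proof -
  have psi_rig_sum: "psi_rig (\<Sum>i\<in>F. f i) = (\<Prod>i\<in>F. psi_rig (f i))" if "finite F" for F and f :: "'r \<Rightarrow> _"
    using that by (induction rule: finite_induct) (simp_all add: psi_rig_zero psi_rig_add)
  have psi_rig_multiple: "psi_rig (\<chi> j. int n * (v $ j)) = psi_rig v ^ n" for n v
  proof (induction n)
    case 0
    then show ?case
      using psi_rig_zero by (simp add: zero_vec_def)
  next
    case (Suc n)
    have "(\<chi> j. int (Suc n) * (v $ j)) = v + (\<chi> j. int n * (v $ j))"
      by (simp add: vec_eq_iff algebra_simps)
    then show ?case
      using Suc by (simp add: psi_rig_add)
  qed
  have "lincomb b (\<lambda>\<rho>. int (k \<rho>)) = (\<Sum>\<rho>\<in>UNIV. (\<chi> j. int (k \<rho>) * (b \<rho> $ j)))"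
    by (simp add: lincomb_def vec_eq_iff sum_component)
  then show ?thesis
    by (simp add: psi_rig_sum psi_rig_multiple)
qed

lemma norm_xr_less_1: "norm (xr \<rho>) < 1"
proof -
  have "norm (xr \<rho>) = real q powr (- Re (sr \<rho>))"
    unfolding xr_def using norm_psi_rig q_gt_1 by (simp add: norm_mult norm_powr_real_powr)
  also have "\<dots> < 1"
    using q_gt_1 Re_sr_pos by (intro powr_less_one) auto
  finally show ?thesis .
qed

definition frac_points :: "'r set \<Rightarrow> 'd Nel set" where
  "frac_points S = insert zeroN {Y \<in> pi0star ns b Sig. rvec (fst Y) \<in> cone_of b S}"

definition exponents :: "'r set \<Rightarrow> 'd Nel \<Rightarrow> ('r \<Rightarrow> nat) set" where
  "exponents S Y = {k. (\<forall>\<rho>. \<rho> \<notin> S \<longrightarrow> k \<rho> = 0) \<and> (\<forall>\<rho>\<in>S. aN b Sig Y \<rho> = 0 \<longrightarrow> 1 \<le> k \<rho>)}"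

definition lift :: "'d Nel \<Rightarrow> ('r \<Rightarrow> nat) \<Rightarrow> 'd Nel" where
  "lift Y k = (fst Y + lincomb b (\<lambda>\<rho>. int (k \<rho>)), snd Y)"

definition block :: "'r set \<Rightarrow> 'd Nel \<Rightarrow> 'd Nel set" where
  "block S Y = {n \<in> Nset ns. {\<rho>. 0 < aN b Sig n \<rho>} = S \<and> qN b Sig n = Y}"

lemma frac_pointsD:
  assumes S: "S \<in> Sig" and Y: "Y \<in> frac_points S"
  shows "Y \<in> Nset ns" and "aN b Sig Y \<rho> < 1" and "\<rho> \<notin> S \<Longrightarrow> aN b Sig Y \<rho> = 0"
proof -
  have "Y \<in> Nset ns \<and> aN b Sig Y \<rho> < 1 \<and> (\<rho> \<notin> S \<longrightarrow> aN b Sig Y \<rho> = 0)"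
  proof (cases "Y = zeroN")
    case True
    then show ?thesis
      using rig_in_Nset[of 0] aN_zeroN by (simp add: zeroN_def)
  next
    case False
    then have "Y \<in> pi0star ns b Sig" and cone: "rvec (fst Y) \<in> cone_of b S"
      using Y by (auto simp: frac_points_def)
    then obtain m where m: "m \<in> Nset ns" "Y = qN b Sig m"
      by (auto simp: pi0star_def)
    then have "Y \<in> Nset ns"
      by (auto simp: Nset_eq_Times qN_def)
    moreover have "aN b Sig Y \<rho> < 1"
      unfolding m(2) aN_qN by (rule frac_lt_1)
    ultimately show ?thesis
      using aN_in_cone[OF S cone] by blast
  qed
  then show "Y \<in> Nset ns" "aN b Sig Y \<rho> < 1" "\<rho> \<notin> S \<Longrightarrow> aN b Sig Y \<rho> = 0"
    by auto
qed

lemma aN_lift: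
  assumes S: "S \<in> Sig" and Y: "Y \<in> frac_points S" and k: "k \<in> exponents S Y"
  shows "aN b Sig (lift Y k) = (\<lambda>\<rho>. aN b Sig Y \<rho> + real (k \<rho>))"
  unfolding aN_def[of b Sig "lift Y k"]
proof (rule acoef_eqI[OF S])
  show "\<forall>\<rho>. \<rho> \<notin> S \<longrightarrow> aN b Sig Y \<rho> + real (k \<rho>) = 0"
    using frac_pointsD(3)[OF S Y] k by (simp add: exponents_def)
  show "\<forall>\<rho>. 0 \<le> aN b Sig Y \<rho> + real (k \<rho>)"
    using aN_nonneg by (simp add: add_nonneg_nonneg)
  show "rvec (fst (lift Y k)) = (\<Sum>\<rho>\<in>UNIV. (aN b Sig Y \<rho> + real (k \<rho>)) *\<^sub>R rvec (b \<rho>))"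
    unfolding lift_def by (simp add: rvec_add rvec_lincomb rvec_fst_eq_aN[of Y] scaleR_add_left sum.distrib)
qed

lemma qN_lift:
  assumes S: "S \<in> Sig" and Y: "Y \<in> frac_points S" and k: "k \<in> exponents S Y"
  shows "qN b Sig (lift Y k) = Y"
proof -
  have "\<lfloor>aN b Sig Y \<rho> + real (k \<rho>)\<rfloor> = int (k \<rho>)" for \<rho>
    using aN_nonneg[of Y \<rho>] frac_pointsD(2)[OF S Y] by (intro floor_unique) auto
  then show ?thesis
    unfolding qN_eq_lincomb aN_lift[OF S Y k] by (simp add: lift_def)
qed

lemma support_lift:
  assumes S: "S \<in> Sig" and Y: "Y \<in> frac_points S" and k: "k \<in> exponents S Y"
  shows "{\<rho>. 0 < aN b Sig (lift Y k) \<rho>} = S"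
proof -
  have "0 < aN b Sig Y \<rho> + real (k \<rho>) \<longleftrightarrow> \<rho> \<in> S" for \<rho>
    using k aN_nonneg[of Y \<rho>] frac_pointsD(3)[OF S Y, of \<rho>]
    by (cases "aN b Sig Y \<rho> = 0") (auto simp: exponents_def)
  then show ?thesis
    unfolding aN_lift[OF S Y k] by auto
qed

lemma lift_in_block:
  assumes S: "S \<in> Sig" and Y: "Y \<in> frac_points S" and k: "k \<in> exponents S Y"
  shows "lift Y k \<in> block S Y"
  using frac_pointsD(1)[OF S Y] support_lift[OF S Y k] qN_lift[OF S Y k]
  by (auto simp: block_def lift_def Nset_eq_Times)

lemma inj_on_lift:
  assumes S: "S \<in> Sig" and Y: "Y \<in> frac_points S"
  shows "inj_on (lift Y) (exponents S Y)"
proof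
  fix k k' assume "k \<in> exponents S Y" "k' \<in> exponents S Y" "lift Y k = lift Y k'"
  then have "(\<lambda>\<rho>. aN b Sig Y \<rho> + real (k \<rho>)) = (\<lambda>\<rho>. aN b Sig Y \<rho> + real (k' \<rho>))"
    using aN_lift[OF S Y] by metis
  then show "k = k'"
    by (auto simp: fun_eq_iff dest: fun_cong)
qed

lemma block_subset_lift_image: "block S Y \<subseteq> lift Y ` exponents S Y"
proof
  fix n assume "n \<in> block S Y"
  then have supp: "{\<rho>. 0 < aN b Sig n \<rho>} = S" and qn: "qN b Sig n = Y"
    by (auto simp: block_def)
  define k where "k \<rho> = nat \<lfloor>aN b Sig n \<rho>\<rfloor>" for \<rho>
  have floor_k: "int (k \<rho>) = \<lfloor>aN b Sig n \<rho>\<rfloor>" for \<rho>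
    unfolding k_def using aN_nonneg[of n \<rho>] by simp
  have aY: "aN b Sig Y \<rho> = frac (aN b Sig n \<rho>)" for \<rho>
    unfolding qn[symmetric] aN_qN ..
  have "k \<in> exponents S Y"
    unfolding exponents_def
  proof (intro CollectI conjI allI impI ballI)
    fix \<rho> assume "\<rho> \<notin> S"
    then show "k \<rho> = 0"
      using supp aN_pos_iff[of n \<rho>] by (auto simp: k_def)
  next
    fix \<rho> assume "\<rho> \<in> S" "aN b Sig Y \<rho> = 0"
    then have "0 < aN b Sig n \<rho>" "aN b Sig n \<rho> = of_int \<lfloor>aN b Sig n \<rho>\<rfloor>"
      using supp aY[of \<rho>] by (auto simp: frac_def)
    then show "1 \<le> k \<rho>"
      using floor_k[of \<rho>] by linarith
  qed
  moreover have "lift Y k = n"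
    using floor_k unfolding lift_def qn[symmetric] qN_eq_lincomb by (simp add: prod_eq_iff)
  ultimately show "n \<in> lift Y ` exponents S Y"
    by blast
qed

lemma bij_betw_lift:
  assumes S: "S \<in> Sig" and Y: "Y \<in> frac_points S"
  shows "bij_betw (lift Y) (exponents S Y) (block S Y)"
  using inj_on_lift[OF S Y] lift_in_block[OF S Y] block_subset_lift_image
  by (intro bij_betw_imageI) blast+

lemma phiN_lift:
  assumes S: "S \<in> Sig" and Y: "Y \<in> frac_points S" and k: "k \<in> exponents S Y"
  shows "phiN b Sig sr sY (lift Y k)
           = (if Y = zeroN then 0 else XiY b Sig sr sY Y) + (\<Sum>\<rho>\<in>S. of_nat (k \<rho>) * sr \<rho>)"
proof -
  have "(\<Sum>\<rho>\<in>UNIV. of_real (aN b Sig (lift Y k) \<rho>) * sr \<rho>)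
          = (\<Sum>\<rho>\<in>UNIV. of_real (aN b Sig Y \<rho>) * sr \<rho>) + (\<Sum>\<rho>\<in>UNIV. of_nat (k \<rho>) * sr \<rho>)"
    unfolding aN_lift[OF S Y k] by (simp add: distrib_right sum.distrib)
  also have "(\<Sum>\<rho>\<in>UNIV. of_nat (k \<rho>) * sr \<rho>) = (\<Sum>\<rho>\<in>S. of_nat (k \<rho>) * sr \<rho>)"
    using k by (intro sum_UNIV_eq_sum_on) (auto simp: exponents_def)
  finally show ?thesis
    unfolding phiN_def XiY_def qN_lift[OF S Y k] by (cases "Y = zeroN") (simp_all add: aN_zeroN)
qed

lemma psi_lift:
  assumes S: "S \<in> Sig" and Y: "Y \<in> frac_points S" and k: "k \<in> exponents S Y"
  shows "psi (lift Y k) = psi Y * (\<Prod>\<rho>\<in>S. psi_rig (b \<rho>) ^ k \<rho>)"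
proof -
  have "Y \<in> Nset ns"
    by (rule frac_pointsD(1)[OF S Y])
  moreover have "lift Y k = addN ns Y (lincomb b (\<lambda>\<rho>. int (k \<rho>)), \<lambda>i. 0)"
    using \<open>Y \<in> Nset ns\<close> by (auto simp: lift_def addN_def Nset_def fun_eq_iff)
  ultimately have "psi (lift Y k) = psi Y * psi_rig (lincomb b (\<lambda>\<rho>. int (k \<rho>)))"
    using psi_hom rig_in_Nset unfolding psi_rig_def by metis
  also have "psi_rig (lincomb b (\<lambda>\<rho>. int (k \<rho>))) = (\<Prod>\<rho>\<in>S. psi_rig (b \<rho>) ^ k \<rho>)"
    unfolding psi_rig_lincomb using k by (intro prod.mono_neutral_right) (auto simp: exponents_def)
  finally show ?thesis .
qed

definition block_coeff :: "'d Nel \<Rightarrow> complex" where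
  "block_coeff Y = (if Y = zeroN then 1 else xY Y)"

lemma summand_lift:
  assumes S: "S \<in> Sig" and Y: "Y \<in> frac_points S" and k: "k \<in> exponents S Y"
  shows "summand (lift Y k) = block_coeff Y * (\<Prod>\<rho>\<in>S. xr \<rho> ^ k \<rho>)"
proof -
  have sum_powr: "(of_nat q :: complex) powr (- (\<Sum>\<rho>\<in>S. of_nat (k \<rho>) * sr \<rho>))
          = (\<Prod>\<rho>\<in>S. ((of_nat q :: complex) powr (- sr \<rho>)) ^ k \<rho>)"
    using powr_sum_of_nat_mult[where z = "of_nat q" and s = "\<lambda>\<rho>. - sr \<rho>"] q_gt_1
    by (simp add: sum_negf)
  show ?thesis
    unfolding summand_def phiN_lift[OF S Y k] psi_lift[OF S Y k] minus_add_distrib powr_add sum_powr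
    using q_gt_1 by (cases "Y = zeroN")
      (simp_all add: block_coeff_def xY_def xr_def power_mult_distrib prod.distrib psi_zeroN mult_ac)
qed

definition block_sum :: "'r set \<Rightarrow> 'd Nel \<Rightarrow> complex" where
  "block_sum S Y = block_coeff Y *
     (\<Prod>\<rho>\<in>S. if aN b Sig Y \<rho> = 0 then xr \<rho> / (1 - xr \<rho>) else 1 / (1 - xr \<rho>))"

lemma has_sum_block:
  assumes S: "S \<in> Sig" and Y: "Y \<in> frac_points S"
  shows "(summand has_sum block_sum S Y) (block S Y)"
proof -
  have "((\<lambda>k. \<Prod>\<rho>\<in>S. xr \<rho> ^ k \<rho>) has_sum
          (\<Prod>\<rho>\<in>S. if aN b Sig Y \<rho> = 0 then xr \<rho> / (1 - xr \<rho>) else 1 / (1 - xr \<rho>))) (exponents S Y)"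
    unfolding exponents_def by (rule has_sum_prod_geometric) (simp_all add: norm_xr_less_1)
  then have "((\<lambda>k. summand (lift Y k)) has_sum block_sum S Y) (exponents S Y)"
    unfolding block_sum_def
    by (subst has_sum_cong[OF summand_lift[OF S Y]]) (auto intro: has_sum_cmult_right)
  then show ?thesis
    using has_sum_reindex_bij_betw[OF bij_betw_lift[OF S Y]] by blast
qed

lemma norm_summable_on_block:
  assumes S: "S \<in> Sig" and Y: "Y \<in> frac_points S"
  shows "(\<lambda>n. norm (summand n)) summable_on block S Y"
proof -
  have "((\<lambda>k. \<Prod>\<rho>\<in>S. norm (xr \<rho>) ^ k \<rho>) has_sum
          (\<Prod>\<rho>\<in>S. if aN b Sig Y \<rho> = 0 then norm (xr \<rho>) / (1 - norm (xr \<rho>))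
                   else 1 / (1 - norm (xr \<rho>)))) (exponents S Y)"
    unfolding exponents_def by (rule has_sum_prod_geometric) (simp_all add: norm_xr_less_1)
  then have "(\<lambda>k. norm (block_coeff Y) * (\<Prod>\<rho>\<in>S. norm (xr \<rho>) ^ k \<rho>)) summable_on exponents S Y"
    by (intro summable_on_cmult_right) (auto simp: summable_on_def)
  then have "(\<lambda>k. norm (summand (lift Y k))) summable_on exponents S Y"
    by (subst summable_on_cong[OF arg_cong[where f = norm, OF summand_lift[OF S Y]]])
       (simp_all add: norm_mult prod_norm[symmetric] norm_power)
  then show ?thesis
    using summable_on_reindex_bij_betw[OF bij_betw_lift[OF S Y]] by blast
qed

lemma Nset_eq_Union_blocks: "Nset ns = (\<Union>(S, Y)\<in>Sigma Sig frac_points. block S Y)"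
proof
  show "(\<Union>(S, Y)\<in>Sigma Sig frac_points. block S Y) \<subseteq> Nset ns"
    by (auto simp: block_def)
next
  show "Nset ns \<subseteq> (\<Union>(S, Y)\<in>Sigma Sig frac_points. block S Y)"
  proof
    fix n :: "'d Nel" assume n: "n \<in> Nset ns"
    define S where "S = {\<rho>. 0 < aN b Sig n \<rho>}"
    have "qN b Sig n \<in> frac_points S"
      using n qN_in_support_cone[of n] by (auto simp: frac_points_def pi0star_def S_def)
    moreover have "n \<in> block S (qN b Sig n)"
      using n by (simp add: block_def S_def)
    ultimately show "n \<in> (\<Union>(S, Y)\<in>Sigma Sig frac_points. block S Y)"
      using aN_support_in_fan[of n] unfolding S_def by blast
  qed
qed

lemma blocks_disjoint:
  "p \<in> Sigma Sig frac_points \<Longrightarrow> p' \<in> Sigma Sig frac_points \<Longrightarrow> p \<noteq> p'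
     \<Longrightarrow> (case p of (S, Y) \<Rightarrow> block S Y) \<inter> (case p' of (S, Y) \<Rightarrow> block S Y) = {}"
  by (auto simp: block_def split: prod.splits)

lemma finite_frac_points: "finite (frac_points S)"
proof -
  have "frac_points S \<subseteq> insert zeroN (qN b Sig ` Nset ns)"
    by (auto simp: frac_points_def pi0star_def)
  then show ?thesis
    using finite_qN_image by (meson finite_insert finite_subset)
qed

lemma finite_blocks: "finite (Sigma Sig frac_points)"
  by (intro finite_SigmaI finite_frac_points) simp

lemma has_sum_summand:
  "(summand has_sum (\<Sum>(S, Y)\<in>Sigma Sig frac_points. block_sum S Y)) (Nset ns)"
  unfolding Nset_eq_Union_blocks
  by (intro sum_has_sum[OF finite_blocks _ blocks_disjoint]) (auto intro: has_sum_block)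

lemma norm_summable_on_summand: "(\<lambda>n. norm (summand n)) summable_on Nset ns"
  unfolding Nset_eq_Union_blocks
  by (intro summable_on_finite_union_disjoint[OF finite_blocks _ blocks_disjoint])
     (auto intro: norm_summable_on_block)

lemma sum_block_sums: "(\<Sum>Y\<in>frac_points S. block_sum S Y) = R_sigma ns b Sig S xr xY"
proof -
  define P where "P = {Y \<in> pi0star ns b Sig. rvec (fst Y) \<in> cone_of b S}"
  define D where "D = (\<Prod>\<rho>\<in>S. (1 - xr \<rho>))"
  have zero_notin: "zeroN \<notin> P"
    by (simp add: P_def pi0star_def)
  have "finite P"
    using finite_frac_points[of S] by (simp add: frac_points_def P_def)
  have "block_sum S zeroN = (\<Prod>\<rho>\<in>S. xr \<rho>) / D"
    using prod_if_divide[of S "\<lambda>_. True" xr] by (simp add: block_sum_def block_coeff_def aN_zeroN D_def)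
  moreover have "block_sum S Y = xY Y * (\<Prod>\<rho>\<in>{\<rho>\<in>S. aN b Sig Y \<rho> = 0}. xr \<rho>) / D" if "Y \<in> P" for Y
    using zero_notin that
    by (cases "Y = zeroN") (simp_all add: block_sum_def block_coeff_def prod_if_divide D_def)
  ultimately have "(\<Sum>Y\<in>frac_points S. block_sum S Y)
      = (\<Prod>\<rho>\<in>S. xr \<rho>) / D + (\<Sum>Y\<in>P. xY Y * (\<Prod>\<rho>\<in>{\<rho>\<in>S. aN b Sig Y \<rho> = 0}. xr \<rho>) / D)"
    unfolding frac_points_def P_def[symmetric] using zero_notin \<open>finite P\<close> by simp
  then show ?thesis
    unfolding R_sigma_def P_def[symmetric] D_def[symmetric] by (simp add: add_divide_distrib sum_divide_distrib)
qed

lemma sum_block_sums_eq_R_Sigma: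
  "(\<Sum>(S, Y)\<in>Sigma Sig frac_points. block_sum S Y) = R_Sigma ns b Sig xr xY"
  unfolding R_Sigma_def sum_block_sums[symmetric]
  by (subst sum.Sigma) (simp_all add: finite_frac_points)

end

section \<open>From the integral over the torus to the sum over \<open>N\<close>\<close>

locale log_homomorphism =
  fixes ns :: "nat list" and M :: "('a::ab_group_add) measure" and lg :: "'a \<Rightarrow> ('d::finite) Nel"
  assumes space_M: "space M = UNIV"
    and translation_invariant: "\<forall>t A. A \<in> sets M \<longrightarrow>
           ((+) t) ` A \<in> sets M \<and> emeasure M (((+) t) ` A) = emeasure M A"
    and lg_meas: "lg \<in> M \<rightarrow>\<^sub>M count_space UNIV"
    and lg_range: "\<forall>x. lg x \<in> Nset ns"
    and lg_surj: "Nset ns \<subseteq> range lg"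
    and lg_hom: "\<forall>x y. lg (x + y) = addN ns (lg x) (lg y)"
    and kernel_measure: "emeasure M {x. lg x = zeroN} = 1"
begin

lemma fibre_sets: "{x. lg x = n} \<in> sets M"
proof -
  have "lg -` {n} \<inter> space M \<in> sets M"
    using lg_meas by (simp add: measurable_def)
  then show ?thesis
    using space_M by (simp add: vimage_def)
qed

lemma fibre_eq_translate_kernel:
  assumes "lg t = n"
  shows "{x. lg x = n} = (+) t ` {x. lg x = zeroN}"
proof
  show "(+) t ` {x. lg x = zeroN} \<subseteq> {x. lg x = n}"
    using assms addN_zeroN_right[of "lg t" ns] lg_range lg_hom by auto
  show "{x. lg x = n} \<subseteq> (+) t ` {x. lg x = zeroN}"
  proof
    fix x assume "x \<in> {x. lg x = n}"
    then have "addN ns (lg t) (lg (x - t)) = lg t"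
      using lg_hom[rule_format, of t "x - t"] assms by simp
    then have "lg (x - t) = zeroN"
      using addN_eq_self_imp_zeroN lg_range by blast
    then show "x \<in> (+) t ` {x. lg x = zeroN}"
      by (intro image_eqI[of _ _ "x - t"]) simp_all
  qed
qed

lemma emeasure_fibre:
  assumes "n \<in> Nset ns"
  shows "emeasure M {x. lg x = n} = 1"
proof -
  obtain t where "lg t = n"
    using lg_surj assms by blast
  then have "emeasure M {x. lg x = n} = emeasure M ((+) t ` {x. lg x = zeroN})"
    by (simp add: fibre_eq_translate_kernel)
  also have "\<dots> = 1"
    using translation_invariant fibre_sets kernel_measure by simp
  finally show ?thesis .
qed

lemma lg_measurable_Nset: "lg \<in> M \<rightarrow>\<^sub>M count_space (Nset ns)"
  unfolding measurable_count_space_eq_countable[OF countable_Nset]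
  using lg_range fibre_sets space_M by (auto simp: vimage_def)

lemma distr_lg: "distr M (count_space (Nset ns)) lg = count_space (Nset ns)"
proof (rule measure_eqI)
  fix A assume "A \<in> sets (distr M (count_space (Nset ns)) lg)"
  then have A: "A \<subseteq> Nset ns"
    by simp
  have "lg -` A \<inter> space M = (\<Union>n\<in>A. {x. lg x = n})"
    using space_M by auto
  then have "emeasure (distr M (count_space (Nset ns)) lg) A = emeasure M (\<Union>n\<in>A. {x. lg x = n})"
    using A by (simp add: emeasure_distr[OF lg_measurable_Nset])
  also have "\<dots> = (\<integral>\<^sup>+n. emeasure M {x. lg x = n} \<partial>count_space A)"
    using A countable_Nset fibre_sets
    by (intro emeasure_UN_countable) (auto simp: disjoint_family_on_def intro: countable_subset)
  also have "\<dots> = (\<integral>\<^sup>+n. 1 \<partial>count_space A)"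
    using A emeasure_fibre by (intro nn_integral_cong) auto
  also have "\<dots> = emeasure (count_space (Nset ns)) A"
    using A by (simp add: emeasure_count_space)
  finally show "emeasure (distr M (count_space (Nset ns)) lg) A = emeasure (count_space (Nset ns)) A" .
qed simp

lemma integral_comp_lg:
  fixes f :: "'d Nel \<Rightarrow> complex"
  assumes "(\<lambda>n. norm (f n)) summable_on Nset ns"
  shows "integrable M (\<lambda>x. f (lg x))" and "integral\<^sup>L M (\<lambda>x. f (lg x)) = infsum f (Nset ns)"
proof -
  have abs: "Infinite_Set_Sum.abs_summable_on f (Nset ns)"
    using abs_summable_equivalent assms by blast
  then have "integrable (count_space (Nset ns)) f"
    by (simp add: abs_summable_on_def)
  then show "integrable M (\<lambda>x. f (lg x))"
    using integrable_distr_eq[OF lg_measurable_Nset, of f] distr_lg by simp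
  have "integral\<^sup>L M (\<lambda>x. f (lg x)) = integral\<^sup>L (count_space (Nset ns)) f"
    using integral_distr[OF lg_measurable_Nset, of f] distr_lg by simp
  also have "\<dots> = infsum f (Nset ns)"
    using infsetsum_infsum[OF abs] by (simp add: infsetsum_def)
  finally show "integral\<^sup>L M (\<lambda>x. f (lg x)) = infsum f (Nset ns)" .
qed

end

theorem mainTheorem11:
  fixes ns :: "nat list"
    and b :: "'r::finite \<Rightarrow> int ^ ('d::finite)"
    and gb :: "'r \<Rightarrow> nat \<Rightarrow> int"
    and Sig :: "'r set set"
    and q :: nat
    and M :: "('a::ab_group_add) measure"
    and lg :: "'a \<Rightarrow> 'd Nel"
    and psi :: "'d Nel \<Rightarrow> complex"
    and sr :: "'r \<Rightarrow> complex"
    and sY :: "'d Nel \<Rightarrow> complex"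
  assumes ns_pos: "\<forall>i < length ns. 0 < ns ! i"
    and fan: "complete_simplicial_fan b Sig"
    and beta_tors: "\<forall>\<rho>. (b \<rho>, gb \<rho>) \<in> Nset ns"
    and coker_finite: "\<exists>m::int. 0 < m \<and> (\<forall>n\<in>Nset ns. smultN ns m n \<in> beta_image ns b gb)"
    and q_prime_power: "\<exists>p k. prime p \<and> 1 \<le> k \<and> q = p ^ k"
    and space_M: "space M = UNIV"
    and translation_invariant: "\<forall>t A. A \<in> sets M \<longrightarrow>
           ((+) t) ` A \<in> sets M \<and> emeasure M (((+) t) ` A) = emeasure M A"
    and lg_meas: "lg \<in> M \<rightarrow>\<^sub>M count_space UNIV"
    and lg_range: "\<forall>x. lg x \<in> Nset ns"
    and lg_surj: "Nset ns \<subseteq> range lg"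
    and lg_hom: "\<forall>x y. lg (x + y) = addN ns (lg x) (lg y)"
    and kernel_measure: "emeasure M {x. lg x = zeroN} = 1"
    and psi_unit: "\<forall>n\<in>Nset ns. norm (psi n) = 1"
    and psi_hom: "\<forall>n\<in>Nset ns. \<forall>m\<in>Nset ns. psi (addN ns n m) = psi n * psi m"
    and Re_s: "\<forall>\<rho>. 0 < Re (sr \<rho>)"
  shows "integrable M (\<lambda>x. inverse (Hv q b Sig sr sY lg x) * cnj (psi (lg x)))
       \<and> (\<lambda>n. norm ((of_nat q :: complex) powr (- phiN b Sig sr sY n) * cnj (psi n))) summable_on Nset ns
       \<and> ((\<lambda>n. (of_nat q :: complex) powr (- phiN b Sig sr sY n) * cnj (psi n)) has_sum
            R_Sigma ns b Sig
              (\<lambda>\<rho>. (of_nat q :: complex) powr (- sr \<rho>) * cnj (psi (b \<rho>, (\<lambda>i. 0))))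
              (\<lambda>Y. (of_nat q :: complex) powr (- XiY b Sig sr sY Y) * cnj (psi Y))) (Nset ns)
       \<and> integral\<^sup>L M (\<lambda>x. inverse (Hv q b Sig sr sY lg x) * cnj (psi (lg x)))
           = R_Sigma ns b Sig
              (\<lambda>\<rho>. (of_nat q :: complex) powr (- sr \<rho>) * cnj (psi (b \<rho>, (\<lambda>i. 0))))
              (\<lambda>Y. (of_nat q :: complex) powr (- XiY b Sig sr sY Y) * cnj (psi Y))"
proof -
  obtain p k where "prime p" "1 \<le> k" "q = p ^ k"
    using q_prime_power by blast
  then have q_gt_1: "1 < q"
    using one_less_power[OF prime_gt_1_nat] by simp
  interpret character_sum b Sig ns q psi sr sY
    using fan ns_pos q_gt_1 psi_unit psi_hom Re_s by unfold_locales
  interpret log_homomorphism ns M lg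
    using space_M translation_invariant lg_meas lg_range lg_surj lg_hom kernel_measure
    by unfold_locales
  have integrand: "(\<lambda>x. inverse (Hv q b Sig sr sY lg x) * cnj (psi (lg x))) = (\<lambda>x. summand (lg x))"
    by (simp add: fun_eq_iff Hv_def summand_def powr_minus)
  have coordinates: "(\<lambda>\<rho>. (of_nat q :: complex) powr (- sr \<rho>) * cnj (psi (b \<rho>, (\<lambda>i. 0)))) = xr"
    "(\<lambda>Y. (of_nat q :: complex) powr (- XiY b Sig sr sY Y) * cnj (psi Y)) = xY"
    by (simp_all add: fun_eq_iff xr_def xY_def psi_rig_def)
  have "(summand has_sum R_Sigma ns b Sig xr xY) (Nset ns)"
    using has_sum_summand unfolding sum_block_sums_eq_R_Sigma .
  then show ?thesis
    unfolding integrand coordinates summand_def[symmetric]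
    using integral_comp_lg[OF norm_summable_on_summand] norm_summable_on_summand
    by (simp add: infsumI)
qed

end
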